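(* Let $G$ and $H$ be Hausdorff locally quasi-convex abelian groups. Then the dual groups of $G\otimes H$ and of $G\otimes_{\mathcal Q}H$ are (algebraically) isomorphic to $\mathbb X(G,H)$, the group of all continuous bicharacters of $G\times H$: $\widehat{G\otimes H}\simeq\widehat{G\otimes_{\mathcal Q}H}\simeq\mathbb X(G,H)$.
   Context: $\mathbb T=\mathbb R/\mathbb Z$; a character is a continuous homomorphism into $\mathbb T$ and $\widehat L$ denotes the group of characters of $L$. A continuous bihomomorphism $b:G\times H\to L$ is separately a continuous homomorphism in each variable and continuous at $(0,0)$; a continuous bicharacter is a continuous bihomomorphism into $\mathbb T$. $G\otimes H$ is the tensor product in the category of all topological abelian groups: the quotient $A(G\times H)/N$ of the free abelian topological group on the space $G\times H$ by the subgroup $N$ generated by all $\sigma(a+b,c)-\sigma(a,c)-\sigma(b,c)$ and $\sigma(a,c+d)-\sigma(a,c)-\sigma(a,d)$ ($\sigma$ the canonical map), with $\otimes$ the composite of $\sigma$ and the quotient map. A subset $A$ of $L$ is quasi-convex if for every $g\notin A$ there is a character $\chi$ with $|\chi(a)|\le1/4$ on $A$ and $|\chi(g)|>1/4$; $\mathcal Q$ is the class of Hausdorff abelian groups with a basis at $0$ of quasi-convex sets. For $G,H\in\mathcal Q$, $G\otimes_{\mathcal Q}H$ is the group in $\mathcal Q$ with a continuous bihomomorphism $\otimes_{\mathcal Q}:G\times H\to G\otimes_{\mathcal Q}H$ through which every continuous bihomomorphism into a group of $\mathcal Q$ factors via a unique continuous homomorphism (unique up to topological isomorphism). *)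

theory Defs
  imports "HOL-Analysis.Analysis" "HOL-Algebra.Free_Abelian_Groups" "HOL-Algebra.Generated_Groups"
begin

definition top_ab_group :: "('a, 'm) monoid_scheme \<Rightarrow> 'a topology \<Rightarrow> bool" where
  "top_ab_group G T \<longleftrightarrow> comm_group G \<and> topspace T = carrier G
     \<and> continuous_map (prod_topology T T) T (\<lambda>(x, y). x \<otimes>\<^bsub>G\<^esub> y)
     \<and> continuous_map T T (\<lambda>x. inv\<^bsub>G\<^esub> x)"

text \<open>We realise T = R/Z as the unit circle in the complex plane (via t \<mapsto> exp(2 pi i t)).
The "absolute value" |t| of t in R/Z (distance to the nearest integer) corresponds to
|Arg z| / (2 pi).\<close>

definition circle_group :: "complex monoid" where
  "circle_group = \<lparr>carrier = sphere 0 1, monoid.mult = (*), one = 1\<rparr>"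

definition circle_top :: "complex topology" where
  "circle_top = subtopology euclidean (sphere 0 1)"

definition tnorm :: "complex \<Rightarrow> real" where
  "tnorm z = \<bar>Arg z\<bar> / (2 * pi)"

definition characters :: "('a, 'm) monoid_scheme \<Rightarrow> 'a topology \<Rightarrow> ('a \<Rightarrow> complex) set" where
  "characters G T = {chr. chr \<in> hom G circle_group \<and> continuous_map T circle_top chr
                         \<and> chr \<in> extensional (carrier G)}"

definition dual_group :: "('a, 'm) monoid_scheme \<Rightarrow> 'a topology \<Rightarrow> ('a \<Rightarrow> complex) monoid" where
  "dual_group G T = \<lparr>carrier = characters G T,
     monoid.mult = (\<lambda>chr psi. \<lambda>x\<in>carrier G. chr x * psi x),
     one = (\<lambda>x\<in>carrier G. 1)\<rparr>"

definition cont_bihom ::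
  "('a, 'm) monoid_scheme \<Rightarrow> 'a topology \<Rightarrow> ('b, 'n) monoid_scheme \<Rightarrow> 'b topology
   \<Rightarrow> ('c, 'k) monoid_scheme \<Rightarrow> 'c topology \<Rightarrow> ('a \<Rightarrow> 'b \<Rightarrow> 'c) \<Rightarrow> bool" where
  "cont_bihom G TG H TH L TL b \<longleftrightarrow>
     (\<forall>x \<in> carrier G. b x \<in> hom H L \<and> continuous_map TH TL (b x)) \<and>
     (\<forall>y \<in> carrier H. (\<lambda>x. b x y) \<in> hom G L \<and> continuous_map TG TL (\<lambda>x. b x y)) \<and>
     (\<forall>V. openin TL V \<and> b \<one>\<^bsub>G\<^esub> \<one>\<^bsub>H\<^esub> \<in> V \<longrightarrow>
        (\<exists>U. openin (prod_topology TG TH) U \<and> (\<one>\<^bsub>G\<^esub>, \<one>\<^bsub>H\<^esub>) \<in> U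
             \<and> (\<forall>(x, y) \<in> U. b x y \<in> V)))"

definition bichar_group ::
  "('a, 'm) monoid_scheme \<Rightarrow> 'a topology \<Rightarrow> ('b, 'n) monoid_scheme \<Rightarrow> 'b topology
   \<Rightarrow> ('a \<Rightarrow> 'b \<Rightarrow> complex) monoid" where
  "bichar_group G TG H TH = \<lparr>
     carrier = {b. cont_bihom G TG H TH circle_group circle_top b
                   \<and> b \<in> extensional (carrier G) \<and> (\<forall>x \<in> carrier G. b x \<in> extensional (carrier H))},
     monoid.mult = (\<lambda>b c. \<lambda>x\<in>carrier G. \<lambda>y\<in>carrier H. b x y * c x y),
     one = (\<lambda>x\<in>carrier G. \<lambda>y\<in>carrier H. 1)\<rparr>"

definition quasi_convex :: "('a, 'm) monoid_scheme \<Rightarrow> 'a topology \<Rightarrow> 'a set \<Rightarrow> bool" where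
  "quasi_convex G T A \<longleftrightarrow> A \<subseteq> carrier G \<and>
     (\<forall>g \<in> carrier G - A. \<exists>chr \<in> characters G T.
        (\<forall>a \<in> A. tnorm (chr a) \<le> 1/4) \<and> tnorm (chr g) > 1/4)"

definition locally_quasi_convex :: "('a, 'm) monoid_scheme \<Rightarrow> 'a topology \<Rightarrow> bool" where
  "locally_quasi_convex G T \<longleftrightarrow>
     (\<forall>U. openin T U \<and> \<one>\<^bsub>G\<^esub> \<in> U \<longrightarrow>
        (\<exists>V. quasi_convex G T V \<and> V \<subseteq> U \<and> \<one>\<^bsub>G\<^esub> \<in> T interior_of V))"

definition class_Q :: "('a, 'm) monoid_scheme \<Rightarrow> 'a topology \<Rightarrow> bool" where
  "class_Q G T \<longleftrightarrow> top_ab_group G T \<and> Hausdorff_space T \<and> locally_quasi_convex G T"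

text \<open>A(X) for a topological space X: the free abelian group on the points of X, carrying
the finest group topology making the canonical map sigma continuous (Markov/Graev).  The
supremum of group topologies is a group topology, so this is the topology generated by the
union of all such topologies.\<close>

definition free_top_ab_topology :: "'a topology \<Rightarrow> ('a \<Rightarrow>\<^sub>0 int) topology" where
  "free_top_ab_topology X = topology_generated_by
     (\<Union> {{U. openin T U} | T. top_ab_group (free_Abelian_group (topspace X)) T
                              \<and> continuous_map X T frag_of})"

definition tensor_A :: "('a, 'm) monoid_scheme \<Rightarrow> ('b, 'n) monoid_scheme \<Rightarrow> ('a \<times> 'b \<Rightarrow>\<^sub>0 int) monoid" where
  "tensor_A G H = free_Abelian_group (carrier G \<times> carrier H)"

definition tensor_N :: "('a, 'm) monoid_scheme \<Rightarrow> ('b, 'n) monoid_scheme \<Rightarrow> ('a \<times> 'b \<Rightarrow>\<^sub>0 int) set" where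
  "tensor_N G H = generate (tensor_A G H)
     ({frag_of (a \<otimes>\<^bsub>G\<^esub> a', c) - frag_of (a, c) - frag_of (a', c) | a a' c.
         a \<in> carrier G \<and> a' \<in> carrier G \<and> c \<in> carrier H} \<union>
      {frag_of (a, c \<otimes>\<^bsub>H\<^esub> c') - frag_of (a, c) - frag_of (a, c') | a c c'.
         a \<in> carrier G \<and> c \<in> carrier H \<and> c' \<in> carrier H})"

definition tensor_group :: "('a, 'm) monoid_scheme \<Rightarrow> ('b, 'n) monoid_scheme \<Rightarrow> ('a \<times> 'b \<Rightarrow>\<^sub>0 int) set monoid" where
  "tensor_group G H = tensor_A G H Mod tensor_N G H"

definition tensor_top :: "('a, 'm) monoid_scheme \<Rightarrow> 'a topology \<Rightarrow> ('b, 'n) monoid_scheme \<Rightarrow> 'b topology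
   \<Rightarrow> ('a \<times> 'b \<Rightarrow>\<^sub>0 int) set topology" where
  "tensor_top G TG H TH = topology (\<lambda>U. U \<subseteq> carrier (tensor_group G H) \<and>
      openin (free_top_ab_topology (prod_topology TG TH)) (\<Union> U))"

definition tensor_map :: "('a, 'm) monoid_scheme \<Rightarrow> ('b, 'n) monoid_scheme \<Rightarrow> 'a \<Rightarrow> 'b \<Rightarrow> ('a \<times> 'b \<Rightarrow>\<^sub>0 int) set" where
  "tensor_map G H x y = tensor_N G H #>\<^bsub>tensor_A G H\<^esub> frag_of (x, y)"

text \<open>(Q, TQ, t) is a Q-tensor product of G and H with respect to target groups carried by the
type 'd: Q is in the class Q, t is a continuous bihomomorphism, and every continuous
bihomomorphism into a group of Q (carried by 'd) factors as f o t for a unique continuous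
homomorphism f (unique on the carrier).\<close>

definition is_Q_tensor ::
  "'d itself \<Rightarrow> ('a, 'm) monoid_scheme \<Rightarrow> 'a topology \<Rightarrow> ('b, 'n) monoid_scheme \<Rightarrow> 'b topology
   \<Rightarrow> ('c, 'k) monoid_scheme \<Rightarrow> 'c topology \<Rightarrow> ('a \<Rightarrow> 'b \<Rightarrow> 'c) \<Rightarrow> bool" where
  "is_Q_tensor (_ :: 'd itself) G TG H TH Q TQ t \<longleftrightarrow>
     class_Q Q TQ \<and> cont_bihom G TG H TH Q TQ t \<and>
     (\<forall>(L :: 'd monoid) TL b. class_Q L TL \<and> cont_bihom G TG H TH L TL b \<longrightarrow>
        (\<exists>!f. f \<in> hom Q L \<and> continuous_map TQ TL f \<and> f \<in> extensional (carrier Q) \<and>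
              (\<forall>x \<in> carrier G. \<forall>y \<in> carrier H. f (t x y) = b x y)))"

end

theory Submission
  imports Defs
begin

text \<open>Both duals are identified with the group of continuous bicharacters by composing characters
with the canonical bihomomorphism. For the \<open>\<Q>\<close>-tensor product this is its universal property
applied to the circle group, which lies in \<open>\<Q>\<close>. For \<open>G \<otimes> H = A(G \<times> H)/N\<close>, a character is the
same as a continuous character of the free abelian topological group \<open>A(G \<times> H)\<close> vanishing on \<open>N\<close>;
it is determined by its values on the generators, and it vanishes on \<open>N\<close> exactly when these values
form a bihomomorphism. Conversely, a continuous bicharacter \<open>b\<close> is jointly continuous, since
\<open>b(x\<^sub>0u, y\<^sub>0v) = b(x\<^sub>0, y\<^sub>0) b(x\<^sub>0, v) b(u, y\<^sub>0) b(u, v)\<close> and the last factor is continuous at the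
identity. Hence the pullback of the circle topology along the homomorphism induced by \<open>b\<close> is a
group topology on \<open>A(G \<times> H)\<close> making the embedding continuous, so it is coarser than the free
topology, and \<open>b\<close> induces a character of \<open>G \<otimes> H\<close>.\<close>

section \<open>The circle group\<close>

lemma circle_group_simps [simp]:
  "carrier circle_group = sphere 0 1"
  "x \<otimes>\<^bsub>circle_group\<^esub> y = x * y"
  "\<one>\<^bsub>circle_group\<^esub> = 1"
  by (auto simp: circle_group_def)

lemma comm_group_circle_group: "comm_group circle_group"
proof -
  have "group circle_group"
  proof (rule groupI)
    fix x assume "x \<in> carrier circle_group"
    then show "\<exists>y\<in>carrier circle_group. y \<otimes>\<^bsub>circle_group\<^esub> x = \<one>\<^bsub>circle_group\<^esub>"
      by (intro bexI[of _ "inverse x"]) (auto simp: norm_inverse intro!: left_inverse)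
  qed (auto simp: norm_mult mult.assoc)
  then show ?thesis
    by (rule group.group_comm_groupI) (auto simp: mult.commute)
qed

lemma group_circle_group: "group circle_group"
  using comm_group_circle_group comm_group_def by blast

lemma inv_circle_group [simp]: "x \<in> sphere 0 1 \<Longrightarrow> inv\<^bsub>circle_group\<^esub> x = inverse x"
  by (rule group.inv_equality[OF group_circle_group]) (auto simp: norm_inverse intro!: left_inverse)

lemma topspace_circle_top [simp]: "topspace circle_top = sphere 0 1"
  by (simp add: circle_top_def)

lemma top_ab_group_circle: "top_ab_group circle_group circle_top"
  unfolding top_ab_group_def
proof (intro conjI)
  have "continuous_map (prod_topology circle_top circle_top) circle_top (\<lambda>(x, y). x * y)"
    unfolding circle_top_def subtopology_Times[symmetric] prod_topology_euclidean
    by (rule continuous_map_into_subtopology)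
       (auto intro!: continuous_map_from_subtopology continuous_intros simp: norm_mult case_prod_unfold
             simp flip: continuous_map_iff_continuous2)
  then show "continuous_map (prod_topology circle_top circle_top) circle_top
               (\<lambda>(x, y). x \<otimes>\<^bsub>circle_group\<^esub> y)"
    by simp
  have "continuous_map circle_top circle_top inverse"
    unfolding circle_top_def
    by (rule continuous_map_into_subtopology)
       (auto simp: continuous_map_iff_continuous norm_inverse intro!: continuous_on_inverse continuous_intros)
  then show "continuous_map circle_top circle_top (\<lambda>x. inv\<^bsub>circle_group\<^esub> x)"
    by (rule continuous_map_eq) auto
qed (simp_all add: comm_group_circle_group)

lemma Hausdorff_space_circle_top: "Hausdorff_space circle_top"
  unfolding circle_top_def by (intro Hausdorff_space_subtopology Hausdorff_space_euclidean)

section \<open>Local quasi-convexity of the circle\<close>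

lemma exp_i_Arg: "z \<in> sphere 0 1 \<Longrightarrow> exp (\<i> * of_real (Arg z)) = z"
  using complex_norm_eq_1_exp_eq by auto

lemma abs_Arg_le_pi: "\<bar>Arg z\<bar> \<le> pi"
  using Arg_bounded[of z] by auto

lemma abs_Arg_exp_i:
  assumes "\<bar>t\<bar> \<le> pi"
  shows "\<bar>Arg (exp (\<i> * of_real t))\<bar> = \<bar>t\<bar>"
proof (cases "t = - pi")
  case True
  then have "exp (\<i> * of_real t) = -1"
    by (simp add: exp_eq_polar cis_conv_exp[symmetric] cis.code complex_eq_iff)
  then show ?thesis using True Arg_of_real[of "-1"] by simp
next
  case False
  then show ?thesis using assms by (subst Arg_exp) auto
qed

lemma tnorm_nonneg: "0 \<le> tnorm z"
  by (simp add: tnorm_def)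

lemma tnorm_le_half: "tnorm z \<le> 1/2"
  using abs_Arg_le_pi[of z] by (simp add: tnorm_def divide_simps)

lemma tnorm_power:
  assumes z: "z \<in> sphere 0 1" and n: "real n * tnorm z \<le> 1/2"
  shows "tnorm (z ^ n) = real n * tnorm z"
proof -
  have "z ^ n = exp (\<i> * of_real (Arg z)) ^ n" using exp_i_Arg[OF z] by simp
  also have "\<dots> = exp (\<i> * of_real (real n * Arg z))"
    by (simp add: exp_of_nat_mult[symmetric] algebra_simps)
  finally have "\<bar>Arg (z ^ n)\<bar> = \<bar>real n * Arg z\<bar>"
    using abs_Arg_exp_i[of "real n * Arg z"] n by (simp add: tnorm_def abs_mult field_simps)
  then show ?thesis by (simp add: tnorm_def abs_mult)
qed

lemma power_in_characters_circle: "(\<lambda>z\<in>sphere 0 1. z ^ n) \<in> characters circle_group circle_top"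
  unfolding characters_def
proof (intro CollectI conjI)
  show "(\<lambda>z\<in>sphere 0 1. z ^ n) \<in> hom circle_group circle_group"
    by (rule homI) (auto simp: norm_mult norm_power power_mult_distrib)
  have "continuous_map circle_top circle_top (\<lambda>z. z ^ n)"
    unfolding circle_top_def
    by (rule continuous_map_into_subtopology)
       (auto simp: continuous_map_iff_continuous norm_power intro!: continuous_intros)
  then show "continuous_map circle_top circle_top (\<lambda>z\<in>sphere 0 1. z ^ n)"
    by (rule continuous_map_eq) auto
qed simp

definition circle_arc :: "nat \<Rightarrow> complex set" where
  "circle_arc m = {z \<in> sphere 0 1. tnorm z \<le> 1 / (4 * real m)}"

lemma multiple_between_quarter_half:
  fixes s :: real
  assumes "1 / (4 * real m) < s" "s \<le> 1/2" "m \<ge> 1"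
  obtains n :: nat where "n \<le> m" "1/4 < real n * s" "real n * s \<le> 1/2"
proof -
  have "0 < 1 / (4 * real m)" using assms(3) by simp
  then have s: "s > 0" using assms(1) by linarith
  define n where "n = nat \<lfloor>1 / (4 * s)\<rfloor> + 1"
  have rn: "real n = of_int \<lfloor>1 / (4 * s)\<rfloor> + 1"
    using s unfolding n_def by simp
  have "1 / (4 * s) < real n" using rn by linarith
  then have "1/4 < real n * s" using s by (simp add: field_simps)
  moreover have "real n * s \<le> 1/2"
  proof (cases "s \<le> 1/4")
    case True
    have "real n - 1 \<le> 1 / (4 * s)" using rn by linarith
    then have "(real n - 1) * s \<le> 1/4" using s by (simp add: field_simps)
    then show ?thesis using True by (simp add: algebra_simps)
  next
    case False
    then have "n = 1" using s unfolding n_def by (simp add: floor_eq_iff field_simps)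
    then show ?thesis using assms(2) by simp
  qed
  moreover have "1 / (4 * s) < real m" using assms(1,3) s by (simp add: field_simps)
  then have "n \<le> m" using rn by linarith
  ultimately show thesis using that by blast
qed

lemma quasi_convex_circle_arc:
  assumes m: "m \<ge> 1"
  shows "quasi_convex circle_group circle_top (circle_arc m)"
  unfolding quasi_convex_def
proof (intro conjI ballI)
  show "circle_arc m \<subseteq> carrier circle_group" by (auto simp: circle_arc_def)
  fix g assume "g \<in> carrier circle_group - circle_arc m"
  then have g: "g \<in> sphere 0 1" "1 / (4 * real m) < tnorm g"
    by (auto simp: circle_arc_def)
  obtain n where n: "n \<le> m" "1/4 < real n * tnorm g" "real n * tnorm g \<le> 1/2"
    using multiple_between_quarter_half[OF g(2) tnorm_le_half m] by blast
  show "\<exists>chr\<in>characters circle_group circle_top.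
          (\<forall>a\<in>circle_arc m. tnorm (chr a) \<le> 1/4) \<and> 1/4 < tnorm (chr g)"
  proof (intro bexI[OF _ power_in_characters_circle[of n]] conjI ballI)
    show "1/4 < tnorm ((\<lambda>z\<in>sphere 0 1. z ^ n) g)"
      using g n tnorm_power by simp
    fix a assume "a \<in> circle_arc m"
    then have a: "a \<in> sphere 0 1" "tnorm a \<le> 1 / (4 * real m)"
      by (auto simp: circle_arc_def)
    have "real n * tnorm a \<le> real m * (1 / (4 * real m))"
      using n(1) a(2) tnorm_nonneg[of a] by (intro mult_mono) auto
    then have "real n * tnorm a \<le> 1/4" using m by simp
    then show "tnorm ((\<lambda>z\<in>sphere 0 1. z ^ n) a) \<le> 1/4"
      using a tnorm_power[of a n] by simp
  qed
qed

lemma one_in_interior_circle_arc: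
  assumes m: "m \<ge> 1"
  shows "1 \<in> circle_top interior_of circle_arc m"
proof -
  define c where "c = cos (pi / (2 * real m))"
  have "z \<in> circle_arc m" if z: "z \<in> sphere 0 1" and re: "Re z > c" for z
  proof -
    have "Re z = Re (exp (\<i> * of_real (Arg z)))" using exp_i_Arg[OF z] by simp
    then have "Re z = cos (Arg z)" by (simp add: Re_exp)
    then have "cos (pi / (2 * real m)) < cos \<bar>Arg z\<bar>" using re c_def by simp
    then have "\<bar>Arg z\<bar> < pi / (2 * real m)"
      using m abs_Arg_le_pi[of z] by (subst (asm) cos_mono_less_eq) (auto simp: field_simps)
    then show ?thesis using z m unfolding circle_arc_def tnorm_def by (simp add: field_simps)
  qed
  moreover have "openin circle_top ({z. Re z > c} \<inter> sphere 0 1)"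
    unfolding circle_top_def
    by (auto simp: openin_open intro!: exI[of _ "{z. Re z > c}"] open_halfspace_Re_gt)
  ultimately have "{z. Re z > c} \<inter> sphere 0 1 \<subseteq> circle_top interior_of circle_arc m"
    by (intro interior_of_maximal) auto
  moreover have "c < cos 0" unfolding c_def using m
    by (subst cos_mono_less_eq) (auto simp: field_simps)
  ultimately show ?thesis by auto
qed

lemma circle_arc_subset_ball:
  assumes m: "m \<ge> 1"
  shows "circle_arc m \<subseteq> cball 1 (pi / (2 * real m))"
proof
  fix z assume "z \<in> circle_arc m"
  then have z: "z \<in> sphere 0 1" "tnorm z \<le> 1 / (4 * real m)" by (auto simp: circle_arc_def)
  have "dist 1 z = cmod (exp (\<i> * of_real (Arg z)) - 1)"
    using exp_i_Arg[OF z(1)] by (simp add: dist_norm norm_minus_commute)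
  also have "\<dots> = 2 * \<bar>sin (Arg z / 2)\<bar>" by (rule dist_exp_i_1)
  also have "\<dots> \<le> \<bar>Arg z\<bar>" using abs_sin_x_le_abs_x[of "Arg z / 2"] by simp
  also have "\<dots> \<le> pi / (2 * real m)" using z(2) m unfolding tnorm_def by (simp add: field_simps)
  finally show "z \<in> cball 1 (pi / (2 * real m))" by simp
qed

lemma locally_quasi_convex_circle: "locally_quasi_convex circle_group circle_top"
  unfolding locally_quasi_convex_def
proof (intro allI impI)
  fix U assume U: "openin circle_top U \<and> \<one>\<^bsub>circle_group\<^esub> \<in> U"
  then obtain T where T: "open T" "U = T \<inter> sphere 0 1"
    unfolding circle_top_def openin_subtopology by (auto simp: openin_open)
  moreover have "1 \<in> T" using T U by auto
  ultimately obtain e where e: "e > 0" "ball 1 e \<subseteq> T"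
    using open_contains_ball by blast
  obtain m :: nat where m: "pi / e < real m" using reals_Archimedean2 by blast
  have "0 < pi / e" using e by simp
  with m have m1: "m \<ge> 1" by (metis less_one not_le of_nat_0 order.asym)
  have "pi < e * real m" "0 \<le> e * real m" using m e by (simp_all add: field_simps)
  then have "pi < 2 * e * real m" by linarith
  then have "pi / (2 * real m) < e" using m1 by (simp add: field_simps)
  then have "circle_arc m \<subseteq> U"
    using circle_arc_subset_ball[OF m1] e T by (force simp: circle_arc_def)
  then show "\<exists>V. quasi_convex circle_group circle_top V \<and> V \<subseteq> U \<and>
               \<one>\<^bsub>circle_group\<^esub> \<in> circle_top interior_of V"
    using quasi_convex_circle_arc[OF m1] one_in_interior_circle_arc[OF m1] by auto
qed

lemma class_Q_circle: "class_Q circle_group circle_top"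
  unfolding class_Q_def
  using top_ab_group_circle Hausdorff_space_circle_top locally_quasi_convex_circle by blast

section \<open>Continuous bihomomorphisms\<close>

lemma top_ab_groupD:
  assumes "top_ab_group G T"
  shows "comm_group G" "group G" "topspace T = carrier G"
    "continuous_map (prod_topology T T) T (\<lambda>(x, y). x \<otimes>\<^bsub>G\<^esub> y)"
    "continuous_map T T (\<lambda>x. inv\<^bsub>G\<^esub> x)"
  using assms unfolding top_ab_group_def by (auto simp: comm_group_def)

lemma continuous_map_left_translation:
  assumes G: "top_ab_group G T" and a: "a \<in> carrier G"
  shows "continuous_map T T (\<lambda>x. a \<otimes>\<^bsub>G\<^esub> x)"
proof -
  have "continuous_map T (prod_topology T T) (\<lambda>x. (a, x))"
    using a top_ab_groupD(3)[OF G] by (auto intro: continuous_map_pairedI)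
  from continuous_map_compose[OF this top_ab_groupD(4)[OF G]] show ?thesis
    by (simp add: o_def)
qed

lemma
  assumes "cont_bihom G TG H TH L TL b"
  shows cont_bihom_hom_snd: "x \<in> carrier G \<Longrightarrow> b x \<in> hom H L"
    and cont_bihom_continuous_snd: "x \<in> carrier G \<Longrightarrow> continuous_map TH TL (b x)"
    and cont_bihom_hom_fst: "y \<in> carrier H \<Longrightarrow> (\<lambda>x. b x y) \<in> hom G L"
    and cont_bihom_continuous_fst: "y \<in> carrier H \<Longrightarrow> continuous_map TG TL (\<lambda>x. b x y)"
  using assms unfolding cont_bihom_def by auto

lemma cont_bihom_cong:
  assumes b: "cont_bihom G TG H TH L TL b"
    and G: "group G" "topspace TG = carrier G" and H: "group H" "topspace TH = carrier H"
    and eq: "\<And>x y. x \<in> carrier G \<Longrightarrow> y \<in> carrier H \<Longrightarrow> b' x y = b x y"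
  shows "cont_bihom G TG H TH L TL b'"
  unfolding cont_bihom_def
proof (intro conjI ballI allI impI)
  fix x assume x: "x \<in> carrier G"
  show "b' x \<in> hom H L" "continuous_map TH TL (b' x)"
    using cont_bihom_hom_snd[OF b x] cont_bihom_continuous_snd[OF b x] eq x H
    by (auto intro: group.hom_eq continuous_map_eq)
next
  fix y assume y: "y \<in> carrier H"
  show "(\<lambda>x. b' x y) \<in> hom G L" "continuous_map TG TL (\<lambda>x. b' x y)"
    using cont_bihom_hom_fst[OF b y] cont_bihom_continuous_fst[OF b y] eq y G
    by (auto intro: group.hom_eq continuous_map_eq)
next
  fix V assume V: "openin TL V \<and> b' \<one>\<^bsub>G\<^esub> \<one>\<^bsub>H\<^esub> \<in> V"
  moreover have "b' \<one>\<^bsub>G\<^esub> \<one>\<^bsub>H\<^esub> = b \<one>\<^bsub>G\<^esub> \<one>\<^bsub>H\<^esub>"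
    using eq G H by (simp add: group.is_monoid monoid.one_closed)
  ultimately obtain U where U: "openin (prod_topology TG TH) U" "(\<one>\<^bsub>G\<^esub>, \<one>\<^bsub>H\<^esub>) \<in> U"
      "\<forall>(x, y)\<in>U. b x y \<in> V"
    using b unfolding cont_bihom_def by auto
  moreover have "b' x y \<in> V" if "(x, y) \<in> U" for x y
  proof -
    have "x \<in> carrier G" "y \<in> carrier H" using openin_subset[OF U(1)] that G H by auto
    then show ?thesis using U(3) that eq by fastforce
  qed
  ultimately show "\<exists>U. openin (prod_topology TG TH) U \<and> (\<one>\<^bsub>G\<^esub>, \<one>\<^bsub>H\<^esub>) \<in> U
                     \<and> (\<forall>(x, y)\<in>U. b' x y \<in> V)"
    by blast
qed

lemma cont_bihom_compose:
  assumes t: "cont_bihom G TG H TH K TK t" and G: "group G" and H: "group H"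
    and K: "topspace TK = carrier K"
    and f: "f \<in> hom K L" "continuous_map TK TL f"
  shows "cont_bihom G TG H TH L TL (\<lambda>x y. f (t x y))"
  unfolding cont_bihom_def
proof (intro conjI ballI allI impI)
  fix x assume x: "x \<in> carrier G"
  show "(\<lambda>y. f (t x y)) \<in> hom H L" "continuous_map TH TL (\<lambda>y. f (t x y))"
    using hom_compose[OF cont_bihom_hom_snd[OF t x] f(1)]
      continuous_map_compose[OF cont_bihom_continuous_snd[OF t x] f(2)]
    by (simp_all add: o_def)
next
  fix y assume y: "y \<in> carrier H"
  show "(\<lambda>x. f (t x y)) \<in> hom G L" "continuous_map TG TL (\<lambda>x. f (t x y))"
    using hom_compose[OF cont_bihom_hom_fst[OF t y] f(1)]
      continuous_map_compose[OF cont_bihom_continuous_fst[OF t y] f(2)]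
    by (simp_all add: o_def)
next
  fix V assume V: "openin TL V \<and> f (t \<one>\<^bsub>G\<^esub> \<one>\<^bsub>H\<^esub>) \<in> V"
  have "t \<one>\<^bsub>G\<^esub> \<one>\<^bsub>H\<^esub> \<in> topspace TK"
    using hom_in_carrier[OF cont_bihom_hom_snd[OF t]] G H K by (simp add: group.is_monoid)
  moreover have "openin TK {q \<in> topspace TK. f q \<in> V}"
    using f(2) V by (simp add: continuous_map_def)
  moreover have "\<forall>W. openin TK W \<and> t \<one>\<^bsub>G\<^esub> \<one>\<^bsub>H\<^esub> \<in> W \<longrightarrow>
      (\<exists>U. openin (prod_topology TG TH) U \<and> (\<one>\<^bsub>G\<^esub>, \<one>\<^bsub>H\<^esub>) \<in> U \<and> (\<forall>(x, y)\<in>U. t x y \<in> W))"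
    using t unfolding cont_bihom_def by blast
  ultimately obtain U where "openin (prod_topology TG TH) U" "(\<one>\<^bsub>G\<^esub>, \<one>\<^bsub>H\<^esub>) \<in> U"
      "\<forall>(x, y)\<in>U. t x y \<in> {q \<in> topspace TK. f q \<in> V}"
    using V by blast
  then show "\<exists>U. openin (prod_topology TG TH) U \<and> (\<one>\<^bsub>G\<^esub>, \<one>\<^bsub>H\<^esub>) \<in> U
                \<and> (\<forall>(x, y)\<in>U. f (t x y) \<in> V)"
    by (intro exI[of _ U]) auto
qed

lemma cont_bihom_of_continuous_map:
  assumes G: "group G" "topspace TG = carrier G" and H: "group H" "topspace TH = carrier H"
    and b: "continuous_map (prod_topology TG TH) TL (\<lambda>(x, y). b x y)"
    and hom_snd: "\<And>x. x \<in> carrier G \<Longrightarrow> b x \<in> hom H L"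
    and hom_fst: "\<And>y. y \<in> carrier H \<Longrightarrow> (\<lambda>x. b x y) \<in> hom G L"
  shows "cont_bihom G TG H TH L TL b"
  unfolding cont_bihom_def
proof (intro conjI ballI allI impI)
  fix x assume "x \<in> carrier G"
  then have "continuous_map TH (prod_topology TG TH) (\<lambda>y. (x, y))"
    using G by (auto intro: continuous_map_pairedI)
  from continuous_map_compose[OF this b] show "continuous_map TH TL (b x)"
    by (simp add: o_def)
next
  fix y assume "y \<in> carrier H"
  then have "continuous_map TG (prod_topology TG TH) (\<lambda>x. (x, y))"
    using H by (auto intro: continuous_map_pairedI)
  from continuous_map_compose[OF this b] show "continuous_map TG TL (\<lambda>x. b x y)"
    by (simp add: o_def)
next
  fix V assume "openin TL V \<and> b \<one>\<^bsub>G\<^esub> \<one>\<^bsub>H\<^esub> \<in> V"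
  then show "\<exists>U. openin (prod_topology TG TH) U \<and> (\<one>\<^bsub>G\<^esub>, \<one>\<^bsub>H\<^esub>) \<in> U \<and> (\<forall>(x, y)\<in>U. b x y \<in> V)"
    using openin_continuous_map_preimage[OF b] G H
    by (intro exI[of _ "{p \<in> topspace (prod_topology TG TH). (\<lambda>(x, y). b x y) p \<in> V}"])
       (auto simp: group.is_monoid)
qed (use hom_snd hom_fst in auto)

lemma bihom_mult_mult:
  assumes hom_snd: "\<And>x. x \<in> carrier G \<Longrightarrow> b x \<in> hom H L"
    and hom_fst: "\<And>y. y \<in> carrier H \<Longrightarrow> (\<lambda>x. b x y) \<in> hom G L"
    and H: "monoid H"
    and x: "x \<in> carrier G" "x' \<in> carrier G" and y: "y \<in> carrier H" "y' \<in> carrier H"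
  shows "b (x \<otimes>\<^bsub>G\<^esub> x') (y \<otimes>\<^bsub>H\<^esub> y') = (b x y \<otimes>\<^bsub>L\<^esub> b x y') \<otimes>\<^bsub>L\<^esub> (b x' y \<otimes>\<^bsub>L\<^esub> b x' y')"
proof -
  have "b (x \<otimes>\<^bsub>G\<^esub> x') (y \<otimes>\<^bsub>H\<^esub> y') = b x (y \<otimes>\<^bsub>H\<^esub> y') \<otimes>\<^bsub>L\<^esub> b x' (y \<otimes>\<^bsub>H\<^esub> y')"
    using hom_mult[OF hom_fst[OF monoid.m_closed[OF H y]] x] by simp
  also have "\<dots> = (b x y \<otimes>\<^bsub>L\<^esub> b x y') \<otimes>\<^bsub>L\<^esub> (b x' y \<otimes>\<^bsub>L\<^esub> b x' y')"
    using hom_mult[OF hom_snd y] x by simp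
  finally show ?thesis .
qed

lemma bihom_decompose_at:
  assumes hom_snd: "\<And>x. x \<in> carrier G \<Longrightarrow> b x \<in> hom H L"
    and hom_fst: "\<And>y. y \<in> carrier H \<Longrightarrow> (\<lambda>x. b x y) \<in> hom G L"
    and G: "group G" and H: "group H"
    and x: "x0 \<in> carrier G" "x \<in> carrier G" and y: "y0 \<in> carrier H" "y \<in> carrier H"
  shows "b x y = (b x0 y0 \<otimes>\<^bsub>L\<^esub> b x0 (inv\<^bsub>H\<^esub> y0 \<otimes>\<^bsub>H\<^esub> y))
                 \<otimes>\<^bsub>L\<^esub> (b (inv\<^bsub>G\<^esub> x0 \<otimes>\<^bsub>G\<^esub> x) y0 \<otimes>\<^bsub>L\<^esub> b (inv\<^bsub>G\<^esub> x0 \<otimes>\<^bsub>G\<^esub> x) (inv\<^bsub>H\<^esub> y0 \<otimes>\<^bsub>H\<^esub> y))"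
proof -
  interpret G: group G by (rule G)
  interpret H: group H by (rule H)
  have "b x y = b (x0 \<otimes>\<^bsub>G\<^esub> (inv\<^bsub>G\<^esub> x0 \<otimes>\<^bsub>G\<^esub> x)) (y0 \<otimes>\<^bsub>H\<^esub> (inv\<^bsub>H\<^esub> y0 \<otimes>\<^bsub>H\<^esub> y))"
    using x y by (simp add: G.m_assoc[symmetric] H.m_assoc[symmetric])
  also have "\<dots> = (b x0 y0 \<otimes>\<^bsub>L\<^esub> b x0 (inv\<^bsub>H\<^esub> y0 \<otimes>\<^bsub>H\<^esub> y))
                 \<otimes>\<^bsub>L\<^esub> (b (inv\<^bsub>G\<^esub> x0 \<otimes>\<^bsub>G\<^esub> x) y0 \<otimes>\<^bsub>L\<^esub> b (inv\<^bsub>G\<^esub> x0 \<otimes>\<^bsub>G\<^esub> x) (inv\<^bsub>H\<^esub> y0 \<otimes>\<^bsub>H\<^esub> y))"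
    using x y by (intro bihom_mult_mult[OF hom_snd hom_fst H.monoid_axioms]) auto
  finally show ?thesis .
qed

lemma continuous_map_circle_top_euclidean:
  "continuous_map X circle_top f \<Longrightarrow> continuous_map X euclidean f"
  unfolding circle_top_def by (simp add: continuous_map_in_subtopology)

lemma tendsto_cont_bihom_circle_one:
  assumes b: "cont_bihom G TG H TH circle_group circle_top b" and one: "b \<one>\<^bsub>G\<^esub> \<one>\<^bsub>H\<^esub> = 1"
    and u: "continuous_map X TG u" "u p = \<one>\<^bsub>G\<^esub>" and v: "continuous_map X TH v" "v p = \<one>\<^bsub>H\<^esub>"
    and p: "p \<in> topspace X"
  shows "((\<lambda>q. b (u q) (v q)) \<longlongrightarrow> 1) (atin X p)"
proof (rule topological_tendstoI)
  fix S :: "complex set" assume S: "open S" "1 \<in> S"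
  have "openin circle_top (S \<inter> sphere 0 1)"
    using S unfolding circle_top_def by (metis Int_commute openin_open_Int)
  moreover have "b \<one>\<^bsub>G\<^esub> \<one>\<^bsub>H\<^esub> \<in> S \<inter> sphere 0 1" using one S by simp
  ultimately obtain U where U: "openin (prod_topology TG TH) U" "(\<one>\<^bsub>G\<^esub>, \<one>\<^bsub>H\<^esub>) \<in> U"
      "\<forall>(x, y)\<in>U. b x y \<in> S \<inter> sphere 0 1"
    using b unfolding cont_bihom_def by blast
  have "openin X {q \<in> topspace X. (u q, v q) \<in> U}"
    using U(1) continuous_map_pairedI[OF u(1) v(1)] by (intro openin_continuous_map_preimage)
  moreover have "p \<in> {q \<in> topspace X. (u q, v q) \<in> U}" using p u v U(2) by simp
  ultimately show "\<forall>\<^sub>F q in atin X p. b (u q) (v q) \<in> S"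
    unfolding eventually_atin using U(3) by blast
qed

lemma cont_bihom_one_fst:
  assumes b: "cont_bihom G TG H TH L TL b" and "group G" "group L" and y: "y \<in> carrier H"
  shows "b \<one>\<^bsub>G\<^esub> y = \<one>\<^bsub>L\<^esub>"
  using group_hom.hom_one[of G L "\<lambda>x. b x y"] cont_bihom_hom_fst[OF b y] assms(2,3)
  by (simp add: group_hom_def group_hom_axioms_def)

lemma cont_bihom_one_snd:
  assumes b: "cont_bihom G TG H TH L TL b" and "group H" "group L" and x: "x \<in> carrier G"
  shows "b x \<one>\<^bsub>H\<^esub> = \<one>\<^bsub>L\<^esub>"
  using group_hom.hom_one[of H L "b x"] cont_bihom_hom_snd[OF b x] assms(2,3)
  by (simp add: group_hom_def group_hom_axioms_def)

lemma tendsto_cont_bihom_circle: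
  fixes G :: "('a, 'm) monoid_scheme" and H :: "('b, 'n) monoid_scheme"
  assumes G: "top_ab_group G TG" and H: "top_ab_group H TH"
    and b: "cont_bihom G TG H TH circle_group circle_top b"
    and x0: "x0 \<in> carrier G" and y0: "y0 \<in> carrier H"
  shows "((\<lambda>(x, y). b x y) \<longlongrightarrow> b x0 y0) (atin (prod_topology TG TH) (x0, y0))"
proof -
  interpret G: comm_group G using top_ab_groupD[OF G] by simp
  interpret H: comm_group H using top_ab_groupD[OF H] by simp
  let ?P = "prod_topology TG TH"
  note one_fst = cont_bihom_one_fst[OF b G.is_group group_circle_group, simplified]
  note one_snd = cont_bihom_one_snd[OF b H.is_group group_circle_group, simplified]
  define u where "u p = inv\<^bsub>G\<^esub> x0 \<otimes>\<^bsub>G\<^esub> fst p" for p :: "'a \<times> 'b"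
  define v where "v p = inv\<^bsub>H\<^esub> y0 \<otimes>\<^bsub>H\<^esub> snd p" for p :: "'a \<times> 'b"
  have u: "continuous_map ?P TG u" "u (x0, y0) = \<one>\<^bsub>G\<^esub>"
    unfolding u_def
    using continuous_map_compose[OF continuous_map_fst[of TG TH]
        continuous_map_left_translation[OF G G.inv_closed[OF x0]]] x0
    by (simp_all add: o_def)
  have v: "continuous_map ?P TH v" "v (x0, y0) = \<one>\<^bsub>H\<^esub>"
    unfolding v_def
    using continuous_map_compose[OF continuous_map_snd[of TG TH]
        continuous_map_left_translation[OF H H.inv_closed[OF y0]]] y0
    by (simp_all add: o_def)
  have p0: "(x0, y0) \<in> topspace ?P" using x0 y0 top_ab_groupD(3)[OF G] top_ab_groupD(3)[OF H] by simp
  have "limitin euclidean (b x0 \<circ> v) 1 (atin ?P (x0, y0))"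
    using continuous_map_circle_top_euclidean[OF continuous_map_compose[OF v(1)
        cont_bihom_continuous_snd[OF b x0]]]
    by (rule limitin_continuous_map[OF _ p0]) (simp add: v(2) one_snd x0)
  moreover have "limitin euclidean ((\<lambda>x. b x y0) \<circ> u) 1 (atin ?P (x0, y0))"
    using continuous_map_circle_top_euclidean[OF continuous_map_compose[OF u(1)
        cont_bihom_continuous_fst[OF b y0]]]
    by (rule limitin_continuous_map[OF _ p0]) (simp add: u(2) one_fst y0)
  moreover have "((\<lambda>p. b (u p) (v p)) \<longlongrightarrow> 1) (atin ?P (x0, y0))"
    by (rule tendsto_cont_bihom_circle_one[OF b _ u(1,2) v(1,2) p0]) (simp add: one_fst)
  ultimately have "((\<lambda>p. (b x0 y0 * b x0 (v p)) * (b (u p) y0 * b (u p) (v p)))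
                     \<longlongrightarrow> (b x0 y0 * 1) * (1 * 1)) (atin ?P (x0, y0))"
    by (intro tendsto_intros) (simp_all add: o_def)
  moreover have "(b x0 y0 * b x0 (v p)) * (b (u p) y0 * b (u p) (v p)) = (\<lambda>(x, y). b x y) p"
    if "p \<in> topspace ?P" for p
  proof -
    have "fst p \<in> carrier G" "snd p \<in> carrier H"
      using that top_ab_groupD(3)[OF G] top_ab_groupD(3)[OF H] by auto
    from bihom_decompose_at[OF cont_bihom_hom_snd[OF b] cont_bihom_hom_fst[OF b] G.is_group H.is_group
        x0 this(1) y0 this(2)]
    show ?thesis by (simp add: u_def v_def case_prod_unfold)
  qed
  then have "\<forall>\<^sub>F p in atin ?P (x0, y0).
               (b x0 y0 * b x0 (v p)) * (b (u p) y0 * b (u p) (v p)) = (\<lambda>(x, y). b x y) p"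
    unfolding eventually_atin using p0 openin_topspace[of ?P] by blast
  ultimately show ?thesis
    by (simp add: Lim_transform_eventually)
qed

lemma continuous_map_cont_bihom_circle:
  assumes G: "top_ab_group G TG" and H: "top_ab_group H TH"
    and b: "cont_bihom G TG H TH circle_group circle_top b"
  shows "continuous_map (prod_topology TG TH) circle_top (\<lambda>(x, y). b x y)"
proof -
  note tG = top_ab_groupD(3)[OF G] and tH = top_ab_groupD(3)[OF H]
  have "continuous_map (prod_topology TG TH) euclidean (\<lambda>(x, y). b x y)"
    using tendsto_cont_bihom_circle[OF G H b] tG tH by (auto simp: continuous_map_atin)
  moreover have "(\<lambda>(x, y). b x y) \<in> topspace (prod_topology TG TH) \<rightarrow> sphere 0 1"
    using hom_in_carrier[OF cont_bihom_hom_snd[OF b]] tG tH by auto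
  ultimately show ?thesis
    unfolding circle_top_def by (rule continuous_map_into_subtopology)
qed

section \<open>Groups representing the continuous bicharacters\<close>

definition represents_bicharacters ::
  "('a, 'm) monoid_scheme \<Rightarrow> 'a topology \<Rightarrow> ('b, 'n) monoid_scheme \<Rightarrow> 'b topology
   \<Rightarrow> ('c, 'k) monoid_scheme \<Rightarrow> 'c topology \<Rightarrow> ('a \<Rightarrow> 'b \<Rightarrow> 'c) \<Rightarrow> bool" where
  "represents_bicharacters G TG H TH K TK \<tau> \<longleftrightarrow>
     (\<forall>x\<in>carrier G. \<forall>y\<in>carrier H. \<tau> x y \<in> carrier K) \<and>
     (\<forall>\<psi>\<in>characters K TK. cont_bihom G TG H TH circle_group circle_top (\<lambda>x y. \<psi> (\<tau> x y))) \<and>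
     (\<forall>b. cont_bihom G TG H TH circle_group circle_top b \<longrightarrow>
        (\<exists>!\<psi>. \<psi> \<in> characters K TK \<and> (\<forall>x\<in>carrier G. \<forall>y\<in>carrier H. \<psi> (\<tau> x y) = b x y)))"

lemma restrict_cont_bihom_in_bichar_group:
  assumes b: "cont_bihom G TG H TH circle_group circle_top b"
    and G: "group G" "topspace TG = carrier G" and H: "group H" "topspace TH = carrier H"
  shows "(\<lambda>x\<in>carrier G. \<lambda>y\<in>carrier H. b x y) \<in> carrier (bichar_group G TG H TH)"
proof -
  have "cont_bihom G TG H TH circle_group circle_top (\<lambda>x\<in>carrier G. \<lambda>y\<in>carrier H. b x y)"
    by (rule cont_bihom_cong[OF b G H]) simp
  then show ?thesis by (simp add: bichar_group_def)
qed

lemma dual_group_iso_bichar_group: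
  assumes \<tau>: "represents_bicharacters G TG H TH K TK \<tau>"
    and G: "group G" "topspace TG = carrier G" and H: "group H" "topspace TH = carrier H"
  shows "dual_group K TK \<cong> bichar_group G TG H TH"
proof -
  have \<tau>_carrier: "\<And>x y. x \<in> carrier G \<Longrightarrow> y \<in> carrier H \<Longrightarrow> \<tau> x y \<in> carrier K"
    and \<tau>_bihom: "\<And>\<psi>. \<psi> \<in> characters K TK
                    \<Longrightarrow> cont_bihom G TG H TH circle_group circle_top (\<lambda>x y. \<psi> (\<tau> x y))"
    and \<tau>_unique: "\<And>b. cont_bihom G TG H TH circle_group circle_top b \<Longrightarrow>
        \<exists>!\<psi>. \<psi> \<in> characters K TK \<and> (\<forall>x\<in>carrier G. \<forall>y\<in>carrier H. \<psi> (\<tau> x y) = b x y)"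
    using \<tau> unfolding represents_bicharacters_def by auto
  define \<Phi> where "\<Phi> \<psi> = (\<lambda>x\<in>carrier G. \<lambda>y\<in>carrier H. \<psi> (\<tau> x y))" for \<psi> :: "_ \<Rightarrow> complex"
  have \<Phi>_carrier: "\<Phi> \<psi> \<in> carrier (bichar_group G TG H TH)" if "\<psi> \<in> characters K TK" for \<psi>
    unfolding \<Phi>_def by (rule restrict_cont_bihom_in_bichar_group[OF \<tau>_bihom[OF that] G H])
  have "\<Phi> \<in> iso (dual_group K TK) (bichar_group G TG H TH)"
    unfolding iso_iff
  proof (intro conjI)
    show "\<Phi> \<in> hom (dual_group K TK) (bichar_group G TG H TH)"
    proof (rule homI)
      show "\<Phi> \<psi> \<in> carrier (bichar_group G TG H TH)" if "\<psi> \<in> carrier (dual_group K TK)" for \<psi>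
        using \<Phi>_carrier that by (simp add: dual_group_def)
    qed (auto simp: dual_group_def bichar_group_def \<Phi>_def \<tau>_carrier fun_eq_iff)
    show "inj_on \<Phi> (carrier (dual_group K TK))"
    proof (rule inj_onI)
      fix \<psi> \<psi>' assume \<psi>: "\<psi> \<in> carrier (dual_group K TK)" "\<psi>' \<in> carrier (dual_group K TK)"
        and eq: "\<Phi> \<psi> = \<Phi> \<psi>'"
      have "\<psi>' (\<tau> x y) = \<psi> (\<tau> x y)" if "x \<in> carrier G" "y \<in> carrier H" for x y
        using fun_cong[OF fun_cong[OF eq, of x], of y] that by (simp add: \<Phi>_def)
      then show "\<psi> = \<psi>'"
        using \<tau>_unique[OF \<tau>_bihom[of \<psi>]] \<psi> by (auto simp: dual_group_def)
    qed
    show "\<Phi> ` carrier (dual_group K TK) = carrier (bichar_group G TG H TH)"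
    proof (intro equalityI subsetI)
      fix b assume "b \<in> carrier (bichar_group G TG H TH)"
      then have b: "cont_bihom G TG H TH circle_group circle_top b" "b \<in> extensional (carrier G)"
          "\<forall>x\<in>carrier G. b x \<in> extensional (carrier H)"
        by (auto simp: bichar_group_def)
      then obtain \<psi> where "\<psi> \<in> characters K TK" "\<forall>x\<in>carrier G. \<forall>y\<in>carrier H. \<psi> (\<tau> x y) = b x y"
        using \<tau>_unique by blast
      moreover from this have "\<Phi> \<psi> = b"
        using b(2,3) by (auto simp: \<Phi>_def fun_eq_iff extensional_def)
      ultimately show "b \<in> \<Phi> ` carrier (dual_group K TK)" by (auto simp: dual_group_def)
    qed (auto simp: \<Phi>_carrier dual_group_def)
  qed
  then show ?thesis by (rule is_isoI)
qed

lemma represents_bicharacters_Q_tensor: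
  assumes Q: "is_Q_tensor TYPE(complex) G TG H TH Q TQ t" and G: "group G" and H: "group H"
  shows "represents_bicharacters G TG H TH Q TQ t"
proof -
  have t: "cont_bihom G TG H TH Q TQ t" and TQ: "topspace TQ = carrier Q"
    using Q unfolding is_Q_tensor_def class_Q_def top_ab_group_def by auto
  have "\<forall>x\<in>carrier G. \<forall>y\<in>carrier H. t x y \<in> carrier Q"
    using t unfolding cont_bihom_def by (meson hom_in_carrier)
  moreover have "cont_bihom G TG H TH circle_group circle_top (\<lambda>x y. \<psi> (t x y))"
    if "\<psi> \<in> characters Q TQ" for \<psi>
    using cont_bihom_compose[OF t G H TQ] that by (auto simp: characters_def)
  moreover have "\<exists>!\<psi>. \<psi> \<in> characters Q TQ \<and> (\<forall>x\<in>carrier G. \<forall>y\<in>carrier H. \<psi> (t x y) = b x y)"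
    if "cont_bihom G TG H TH circle_group circle_top b" for b
    using Q class_Q_circle that unfolding is_Q_tensor_def characters_def by auto
  ultimately show ?thesis
    unfolding represents_bicharacters_def by blast
qed

section \<open>Quotient groups with the quotient topology\<close>

lemma (in group) Union_rcosets_eq:
  assumes N: "subgroup N G" and U: "U \<subseteq> rcosets N"
  shows "\<Union>U = {a \<in> carrier G. N #> a \<in> U}"
proof (intro equalityI subsetI)
  fix a assume "a \<in> \<Union>U"
  then obtain c where c: "c \<in> carrier G" "N #> c \<in> U" "a \<in> N #> c"
    using U unfolding RCOSETS_def by blast
  then show "a \<in> {a \<in> carrier G. N #> a \<in> U}"
    using repr_independence[OF c(3,1) N] subgroup.elemrcos_carrier[OF N is_group c(1,3)] by simp
qed (use rcos_self[OF _ N] in auto)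

definition quotient_group_topology :: "('a, 'm) monoid_scheme \<Rightarrow> 'a set \<Rightarrow> 'a topology \<Rightarrow> 'a set topology" where
  "quotient_group_topology A N TA = topology (\<lambda>U. U \<subseteq> carrier (A Mod N) \<and> openin TA (\<Union>U))"

lemma openin_quotient_group_topology:
  assumes A: "group A" and N: "subgroup N A"
  shows "openin (quotient_group_topology A N TA) U \<longleftrightarrow> U \<subseteq> carrier (A Mod N) \<and> openin TA (\<Union>U)"
proof -
  let ?open = "\<lambda>U. U \<subseteq> carrier (A Mod N) \<and> openin TA (\<Union>U)"
  have "?open (U \<inter> V)" if "?open U" "?open V" for U V
  proof -
    have "\<Union>(U \<inter> V) = \<Union>U \<inter> \<Union>V"
      using that group.Union_rcosets_eq[OF A N] by (simp add: FactGroup_def Int_mono) blast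
    then show ?thesis using that by auto
  qed
  moreover have "?open (\<Union>\<U>)" if "\<forall>U\<in>\<U>. ?open U" for \<U>
  proof -
    have "\<Union>(\<Union>\<U>) = (\<Union>U\<in>\<U>. \<Union>U)" by auto
    then show ?thesis using that by auto
  qed
  ultimately have "istopology ?open"
    unfolding istopology_def by blast
  then show ?thesis by (simp add: quotient_group_topology_def)
qed

lemma quotient_map_quotient_group_topology:
  assumes A: "group A" and N: "subgroup N A" and TA: "topspace TA = carrier A"
  shows "quotient_map TA (quotient_group_topology A N TA) (\<lambda>a. N #>\<^bsub>A\<^esub> a)"
proof -
  have carrier_open: "openin (quotient_group_topology A N TA) (carrier (A Mod N))"
    using group.rcosets_part_G[OF A N] openin_topspace[of TA] TA
    by (simp add: openin_quotient_group_topology[OF A N] FactGroup_def)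
  have "topspace (quotient_group_topology A N TA) = carrier (A Mod N)"
    using openin_subset[OF carrier_open] openin_subset[of "quotient_group_topology A N TA"]
      openin_quotient_group_topology[OF A N] by (metis openin_topspace subset_antisym)
  moreover have "(\<lambda>a. N #>\<^bsub>A\<^esub> a) ` carrier A = carrier (A Mod N)"
    by (auto simp: FactGroup_def RCOSETS_def)
  ultimately show ?thesis
    unfolding quotient_map_def
    using group.Union_rcosets_eq[OF A N] TA
    by (auto simp: openin_quotient_group_topology[OF A N] FactGroup_def simp del: Union_iff)
qed

lemma
  assumes A: "group A" and N: "N \<lhd> A" and TA: "topspace TA = carrier A"
    and \<psi>: "\<psi> \<in> characters (A Mod N) (quotient_group_topology A N TA)"
  shows character_comp_r_coset_hom: "(\<lambda>a. \<psi> (N #>\<^bsub>A\<^esub> a)) \<in> hom A circle_group"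
    and character_comp_r_coset_continuous: "continuous_map TA circle_top (\<lambda>a. \<psi> (N #>\<^bsub>A\<^esub> a))"
    and character_comp_r_coset_kernel: "N \<subseteq> kernel A circle_group (\<lambda>a. \<psi> (N #>\<^bsub>A\<^esub> a))"
proof -
  interpret N: normal N A by (rule N)
  have \<psi>': "\<psi> \<in> hom (A Mod N) circle_group" "continuous_map (quotient_group_topology A N TA) circle_top \<psi>"
    using \<psi> by (auto simp: characters_def)
  show hom: "(\<lambda>a. \<psi> (N #>\<^bsub>A\<^esub> a)) \<in> hom A circle_group"
    using hom_compose[OF N.r_coset_hom_Mod \<psi>'(1)] by (simp add: o_def)
  show "continuous_map TA circle_top (\<lambda>a. \<psi> (N #>\<^bsub>A\<^esub> a))"
    using continuous_map_compose[OF quotient_imp_continuous_map[OF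
        quotient_map_quotient_group_topology[OF A N.subgroup_axioms TA]] \<psi>'(2)]
    by (simp add: o_def)
  have "\<psi> N = 1"
    using group_hom.hom_one[of "A Mod N" circle_group \<psi>] \<psi>'(1) N.factorgroup_is_group
    by (simp add: group_hom_def group_hom_axioms_def group_circle_group)
  then show "N \<subseteq> kernel A circle_group (\<lambda>a. \<psi> (N #>\<^bsub>A\<^esub> a))"
    using N.rcos_const A by (auto simp: kernel_def N.subset)
qed

lemma character_quotient_group_exists:
  assumes A: "group A" and N: "N \<lhd> A" and TA: "topspace TA = carrier A"
    and \<phi>: "\<phi> \<in> hom A circle_group" "continuous_map TA circle_top \<phi>"
    and kernel: "N \<subseteq> kernel A circle_group \<phi>"
  obtains \<psi> where "\<psi> \<in> characters (A Mod N) (quotient_group_topology A N TA)"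
    "\<And>a. a \<in> carrier A \<Longrightarrow> \<psi> (N #>\<^bsub>A\<^esub> a) = \<phi> a"
proof -
  interpret N: normal N A by (rule N)
  have "group_hom A circle_group \<phi>"
    using \<phi>(1) A by (simp add: group_hom_def group_hom_axioms_def group_circle_group)
  then obtain g where g: "g \<in> hom (A Mod N) circle_group" "\<And>a. a \<in> carrier A \<Longrightarrow> g (N #>\<^bsub>A\<^esub> a) = \<phi> a"
    using group_hom.FactGroup_universal_kernel[OF _ N kernel] by blast
  define \<psi> where "\<psi> = restrict g (carrier (A Mod N))"
  have \<psi>_coset: "\<psi> (N #>\<^bsub>A\<^esub> a) = \<phi> a" if "a \<in> carrier A" for a
    using g(2)[OF that] that by (auto simp: \<psi>_def FactGroup_def RCOSETS_def)
  have q: "quotient_map TA (quotient_group_topology A N TA) (\<lambda>a. N #>\<^bsub>A\<^esub> a)"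
    by (rule quotient_map_quotient_group_topology[OF A N.subgroup_axioms TA])
  have "continuous_map TA circle_top (\<psi> \<circ> (\<lambda>a. N #>\<^bsub>A\<^esub> a))"
    using \<phi>(2) by (rule continuous_map_eq) (simp add: TA \<psi>_coset)
  then have "continuous_map (quotient_group_topology A N TA) circle_top \<psi>"
    by (rule continuous_compose_quotient_map[OF q])
  moreover have "\<psi> \<in> hom (A Mod N) circle_group"
    using g(1) N.factorgroup_is_group by (simp add: \<psi>_def group.hom_restrict)
  ultimately have "\<psi> \<in> characters (A Mod N) (quotient_group_topology A N TA)"
    by (simp add: characters_def \<psi>_def)
  then show thesis using that \<psi>_coset by blast
qed

lemma characters_quotient_group_eqI:
  assumes "\<psi> \<in> characters (A Mod N) T" "\<psi>' \<in> characters (A Mod N) T"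
    and "\<And>a. a \<in> carrier A \<Longrightarrow> \<psi> (N #>\<^bsub>A\<^esub> a) = \<psi>' (N #>\<^bsub>A\<^esub> a)"
  shows "\<psi> = \<psi>'"
  using assms by (intro extensionalityI[of _ "carrier (A Mod N)"])
    (auto simp: characters_def FactGroup_def RCOSETS_def)

section \<open>The free abelian topological group\<close>

lemma top_ab_group_pullback_topology:
  assumes A: "comm_group A" and L: "top_ab_group L TL" and \<phi>: "\<phi> \<in> hom A L"
  shows "top_ab_group A (pullback_topology (carrier A) \<phi> TL)"
proof -
  interpret A: comm_group A by (rule A)
  interpret L: comm_group L using top_ab_groupD[OF L] by simp
  interpret \<phi>: group_hom A L \<phi>
    using \<phi> by (simp add: group_hom_def group_hom_axioms_def A.is_group L.is_group)
  define P where "P = pullback_topology (carrier A) \<phi> TL"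
  have P: "topspace P = carrier A"
    using \<phi> top_ab_groupD(3)[OF L] by (auto simp: P_def topspace_pullback_topology hom_def)
  have \<phi>_cont: "continuous_map P TL \<phi>"
    using continuous_map_pullback[OF continuous_map_id] by (simp add: P_def)
  have into_P: "continuous_map Y P f" if "continuous_map Y TL (\<phi> \<circ> f)" "f \<in> topspace Y \<rightarrow> carrier A" for Y f
    using continuous_map_pullback'[OF that(1)] that(2) unfolding P_def by (simp add: Pi_iff subset_iff)
  have "continuous_map (prod_topology P P) (prod_topology TL TL) (\<lambda>p. (\<phi> (fst p), \<phi> (snd p)))"
    using continuous_map_pairedI[OF continuous_map_compose[OF continuous_map_fst \<phi>_cont]
        continuous_map_compose[OF continuous_map_snd \<phi>_cont]] by (simp add: o_def)
  from continuous_map_compose[OF this top_ab_groupD(4)[OF L]]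
  have "continuous_map (prod_topology P P) TL (\<phi> \<circ> (\<lambda>(x, y). x \<otimes>\<^bsub>A\<^esub> y))"
    by (rule continuous_map_eq) (auto simp: P)
  then have mult: "continuous_map (prod_topology P P) P (\<lambda>(x, y). x \<otimes>\<^bsub>A\<^esub> y)"
    by (rule into_P) (auto simp: P)
  have "continuous_map P TL (\<phi> \<circ> (\<lambda>x. inv\<^bsub>A\<^esub> x))"
    using continuous_map_compose[OF \<phi>_cont top_ab_groupD(5)[OF L]]
    by (rule continuous_map_eq) (simp add: P)
  then have inv: "continuous_map P P (\<lambda>x. inv\<^bsub>A\<^esub> x)"
    by (rule into_P) (auto simp: P)
  show ?thesis
    using A P mult inv unfolding top_ab_group_def P_def by simp
qed

lemma openin_free_top_ab_topologyI:
  assumes "top_ab_group (free_Abelian_group (topspace X)) T" "continuous_map X T frag_of" "openin T U"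
  shows "openin (free_top_ab_topology X) U"
  unfolding free_top_ab_topology_def by (rule topology_generated_by_Basis) (use assms in blast)

text \<open>The trivial homomorphism to the circle pulls back the indiscrete group topology, in which
the whole carrier is open.\<close>

lemma topspace_free_top_ab_topology:
  "topspace (free_top_ab_topology X) = carrier (free_Abelian_group (topspace X))"
proof (rule antisym)
  let ?A = "free_Abelian_group (topspace X)"
  show "topspace (free_top_ab_topology X) \<subseteq> carrier ?A"
    unfolding free_top_ab_topology_def topology_generated_by_topspace
    using openin_subset top_ab_groupD(3) by fastforce
  let ?P = "pullback_topology (carrier ?A) (\<lambda>_. 1) circle_top"
  have "top_ab_group ?A ?P"
    using top_ab_group_pullback_topology[OF abelian_free_Abelian_group top_ab_group_circle
        trivial_hom[OF group_circle_group]] by simp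
  moreover have "continuous_map X ?P frag_of"
    by (rule continuous_map_pullback') (auto simp: o_def)
  ultimately have "openin (free_top_ab_topology X) (topspace ?P)"
    by (intro openin_free_top_ab_topologyI) auto
  then show "carrier ?A \<subseteq> topspace (free_top_ab_topology X)"
    using openin_subset by (fastforce simp: topspace_pullback_topology)
qed

lemma continuous_map_frag_of_free_top_ab_topology:
  "continuous_map X (free_top_ab_topology X) frag_of"
proof -
  have "frag_of ` topspace X \<subseteq> topspace (free_top_ab_topology X)"
    by (auto simp: topspace_free_top_ab_topology)
  then show ?thesis
    unfolding free_top_ab_topology_def continuous_on_generated_topo_iff
    by (auto simp: Int_commute vimage_def Collect_conj_eq Collect_mem_eq
             dest!: openin_continuous_map_preimage)
qed

lemma continuous_map_free_top_ab_topologyI: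
  assumes L: "top_ab_group L TL" and h: "h \<in> hom (free_Abelian_group (topspace X)) L"
    and h_frag_of: "continuous_map X TL (h \<circ> frag_of)"
  shows "continuous_map (free_top_ab_topology X) TL h"
proof -
  let ?A = "free_Abelian_group (topspace X)"
  define P where "P = pullback_topology (carrier ?A) h TL"
  have P: "topspace P = carrier ?A"
    using h top_ab_groupD(3)[OF L] by (auto simp: P_def topspace_pullback_topology hom_def)
  have "top_ab_group ?A P"
    unfolding P_def by (rule top_ab_group_pullback_topology[OF abelian_free_Abelian_group L h])
  moreover have "continuous_map X P frag_of"
    unfolding P_def by (rule continuous_map_pullback'[OF h_frag_of]) auto
  moreover have h_cont: "continuous_map P TL h"
    using continuous_map_pullback[OF continuous_map_id] by (simp add: P_def)
  ultimately have "openin (free_top_ab_topology X) {a \<in> topspace P. h a \<in> W}" if "openin TL W" for W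
    using openin_continuous_map_preimage[OF h_cont that] by (intro openin_free_top_ab_topologyI)
  then show ?thesis
    using h_cont P unfolding continuous_map_def topspace_free_top_ab_topology by auto
qed

section \<open>Characters of the tensor product\<close>

lemma diff_in_free_Abelian_group:
  "u \<in> carrier (free_Abelian_group S) \<Longrightarrow> v \<in> carrier (free_Abelian_group S)
   \<Longrightarrow> u - v \<in> carrier (free_Abelian_group S)"
  using keys_diff[of u v] by auto

lemma hom_free_Abelian_group_eqI:
  assumes L: "group L"
    and h: "h \<in> hom (free_Abelian_group S) L" and h': "h' \<in> hom (free_Abelian_group S) L"
    and eq: "\<And>s. s \<in> S \<Longrightarrow> h (frag_of s) = h' (frag_of s)"
    and a: "a \<in> carrier (free_Abelian_group S)"
  shows "h a = h' a"
proof -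
  have hom_diff: "g (u - v) = g u \<otimes>\<^bsub>L\<^esub> inv\<^bsub>L\<^esub> g v"
    if g: "g \<in> hom (free_Abelian_group S) L"
      and u: "u \<in> carrier (free_Abelian_group S)" and v: "v \<in> carrier (free_Abelian_group S)"
    for g u v
  proof -
    interpret g: group_hom "free_Abelian_group S" L g
      using g L by (simp add: group_hom_def group_hom_axioms_def)
    have "g (u - v) = g (u \<otimes>\<^bsub>free_Abelian_group S\<^esub> inv\<^bsub>free_Abelian_group S\<^esub> v)"
      using v by simp
    also have "\<dots> = g u \<otimes>\<^bsub>L\<^esub> g (inv\<^bsub>free_Abelian_group S\<^esub> v)"
      using u v by (intro g.hom_mult) simp_all
    finally show ?thesis by (simp only: g.hom_inv[OF v])
  qed
  show ?thesis
  proof (rule free_Abelian_group_induct[where P = "\<lambda>a. h a = h' a"])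
    show "Poly_Mapping.keys a \<subseteq> S" using a by simp
    show "h 0 = h' 0"
      using group_hom.hom_one[of "free_Abelian_group S" L h] group_hom.hom_one[of "free_Abelian_group S" L h']
        h h' L
      by (simp add: group_hom_def group_hom_axioms_def)
  qed (simp_all add: eq hom_diff[OF h] hom_diff[OF h'])
qed

definition tensor_relators :: "('a, 'm) monoid_scheme \<Rightarrow> ('b, 'n) monoid_scheme \<Rightarrow> ('a \<times> 'b \<Rightarrow>\<^sub>0 int) set" where
  "tensor_relators G H =
     {frag_of (a \<otimes>\<^bsub>G\<^esub> a', c) - frag_of (a, c) - frag_of (a', c) | a a' c.
         a \<in> carrier G \<and> a' \<in> carrier G \<and> c \<in> carrier H} \<union>
     {frag_of (a, c \<otimes>\<^bsub>H\<^esub> c') - frag_of (a, c) - frag_of (a, c') | a c c'.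
         a \<in> carrier G \<and> c \<in> carrier H \<and> c' \<in> carrier H}"

lemma tensor_N_eq_generate: "tensor_N G H = generate (tensor_A G H) (tensor_relators G H)"
  by (simp add: tensor_N_def tensor_relators_def)

lemma tensor_relators_subset_carrier:
  assumes "monoid G" "monoid H"
  shows "tensor_relators G H \<subseteq> carrier (tensor_A G H)"
  unfolding tensor_relators_def
  using assms by (auto simp: tensor_A_def monoid.m_closed intro!: diff_in_free_Abelian_group)

lemma normal_tensor_N:
  assumes "monoid G" "monoid H"
  shows "tensor_N G H \<lhd> tensor_A G H"
proof -
  interpret A: comm_group "tensor_A G H"
    unfolding tensor_A_def by (rule abelian_free_Abelian_group)
  show ?thesis
    unfolding tensor_N_eq_generate A.normal_iff_subgroup
    by (rule A.generate_is_subgroup[OF tensor_relators_subset_carrier[OF assms]])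
qed

lemma diff_diff_in_kernel_iff:
  assumes L: "group L" and \<phi>: "\<phi> \<in> hom (free_Abelian_group S) L"
    and f: "f \<in> carrier (free_Abelian_group S)" "f' \<in> carrier (free_Abelian_group S)"
      "f'' \<in> carrier (free_Abelian_group S)"
  shows "f - f' - f'' \<in> kernel (free_Abelian_group S) L \<phi> \<longleftrightarrow> \<phi> f = \<phi> f' \<otimes>\<^bsub>L\<^esub> \<phi> f''"
proof -
  interpret L: group L by (rule L)
  interpret \<phi>: group_hom "free_Abelian_group S" L \<phi>
    using \<phi> by (simp add: group_hom_def group_hom_axioms_def)
  have g: "f - f' - f'' \<in> carrier (free_Abelian_group S)"
    using f by (intro diff_in_free_Abelian_group)
  have "\<phi> f = \<phi> (f - f' - f'') \<otimes>\<^bsub>L\<^esub> (\<phi> f' \<otimes>\<^bsub>L\<^esub> \<phi> f'')"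
    using \<phi>.hom_mult[OF g f(2)] \<phi>.hom_mult[OF \<phi>.G.m_closed[OF g f(2)] f(3)] f g
    by (simp add: L.m_assoc)
  then show ?thesis
    using f g by (simp add: kernel_def)
qed

lemma (in group_hom) generate_subset_kernel_iff:
  "generate G S \<subseteq> kernel G H h \<longleftrightarrow> S \<subseteq> kernel G H h"
proof
  assume "generate G S \<subseteq> kernel G H h"
  then show "S \<subseteq> kernel G H h" using generate.incl[of _ S G] by blast
next
  assume "S \<subseteq> kernel G H h"
  then show "generate G S \<subseteq> kernel G H h" by (rule G.generate_subgroup_incl[OF _ subgroup_kernel])
qed

lemma tensor_N_subset_kernel_iff:
  assumes G: "monoid G" and H: "monoid H" and L: "group L" and \<phi>: "\<phi> \<in> hom (tensor_A G H) L"
  shows "tensor_N G H \<subseteq> kernel (tensor_A G H) L \<phi> \<longleftrightarrow>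
           (\<forall>x\<in>carrier G. (\<lambda>y. \<phi> (frag_of (x, y))) \<in> hom H L) \<and>
           (\<forall>y\<in>carrier H. (\<lambda>x. \<phi> (frag_of (x, y))) \<in> hom G L)"
proof -
  interpret \<phi>: group_hom "tensor_A G H" L \<phi>
    using \<phi> L by (simp add: group_hom_def group_hom_axioms_def tensor_A_def)
  have frag: "frag_of (x, y) \<in> carrier (tensor_A G H)" if "x \<in> carrier G" "y \<in> carrier H" for x y
    using that by (simp add: tensor_A_def)
  have "tensor_N G H \<subseteq> kernel (tensor_A G H) L \<phi> \<longleftrightarrow>
          tensor_relators G H \<subseteq> kernel (tensor_A G H) L \<phi>"
    unfolding tensor_N_eq_generate by (rule \<phi>.generate_subset_kernel_iff)
  also have "\<dots> \<longleftrightarrow>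
          (\<forall>a\<in>carrier G. \<forall>a'\<in>carrier G. \<forall>c\<in>carrier H.
             frag_of (a \<otimes>\<^bsub>G\<^esub> a', c) - frag_of (a, c) - frag_of (a', c) \<in> kernel (tensor_A G H) L \<phi>) \<and>
          (\<forall>a\<in>carrier G. \<forall>c\<in>carrier H. \<forall>c'\<in>carrier H.
             frag_of (a, c \<otimes>\<^bsub>H\<^esub> c') - frag_of (a, c) - frag_of (a, c') \<in> kernel (tensor_A G H) L \<phi>)"
    unfolding tensor_relators_def by blast
  also have "\<dots> \<longleftrightarrow> (\<forall>a\<in>carrier G. \<forall>a'\<in>carrier G. \<forall>c\<in>carrier H.
                      \<phi> (frag_of (a \<otimes>\<^bsub>G\<^esub> a', c)) = \<phi> (frag_of (a, c)) \<otimes>\<^bsub>L\<^esub> \<phi> (frag_of (a', c))) \<and>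
                    (\<forall>a\<in>carrier G. \<forall>c\<in>carrier H. \<forall>c'\<in>carrier H.
                      \<phi> (frag_of (a, c \<otimes>\<^bsub>H\<^esub> c')) = \<phi> (frag_of (a, c)) \<otimes>\<^bsub>L\<^esub> \<phi> (frag_of (a, c')))"
    using diff_diff_in_kernel_iff[OF L \<phi>[unfolded tensor_A_def]] frag
    by (simp add: monoid.m_closed[OF G] monoid.m_closed[OF H] tensor_A_def)
  also have "\<dots> \<longleftrightarrow> (\<forall>x\<in>carrier G. (\<lambda>y. \<phi> (frag_of (x, y))) \<in> hom H L) \<and>
                    (\<forall>y\<in>carrier H. (\<lambda>x. \<phi> (frag_of (x, y))) \<in> hom G L)"
    using frag by (auto simp: hom_def Pi_iff)
  finally show ?thesis .
qed

locale top_ab_group_pair =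
  fixes G :: "('a, 'm) monoid_scheme" and TG :: "'a topology"
    and H :: "('b, 'n) monoid_scheme" and TH :: "'b topology"
  assumes top_ab_G: "top_ab_group G TG" and top_ab_H: "top_ab_group H TH"
begin

sublocale G: comm_group G by (rule top_ab_groupD(1)[OF top_ab_G])
sublocale H: comm_group H by (rule top_ab_groupD(1)[OF top_ab_H])

abbreviation A where "A \<equiv> tensor_A G H"
abbreviation N where "N \<equiv> tensor_N G H"
abbreviation TA where "TA \<equiv> free_top_ab_topology (prod_topology TG TH)"

lemma topspace_G [simp]: "topspace TG = carrier G"
  using top_ab_groupD(3)[OF top_ab_G] .

lemma topspace_H [simp]: "topspace TH = carrier H"
  using top_ab_groupD(3)[OF top_ab_H] .

sublocale A: comm_group A
  unfolding tensor_A_def by (rule abelian_free_Abelian_group)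

lemma normal_N: "N \<lhd> A"
  by (rule normal_tensor_N[OF G.monoid_axioms H.monoid_axioms])

lemma topspace_TA: "topspace TA = carrier A"
  by (simp add: tensor_A_def topspace_free_top_ab_topology)

lemma frag_of_in_A: "x \<in> carrier G \<Longrightarrow> y \<in> carrier H \<Longrightarrow> frag_of (x, y) \<in> carrier A"
  by (simp add: tensor_A_def)

lemma tensor_eqs:
  "tensor_group G H = A Mod N"
  "tensor_top G TG H TH = quotient_group_topology A N TA"
  "tensor_map G H x y = N #>\<^bsub>A\<^esub> frag_of (x, y)"
  by (simp_all add: tensor_group_def tensor_top_def quotient_group_topology_def tensor_map_def)

lemma cont_bihom_character_tensor_map:
  assumes \<psi>: "\<psi> \<in> characters (tensor_group G H) (tensor_top G TG H TH)"
  shows "cont_bihom G TG H TH circle_group circle_top (\<lambda>x y. \<psi> (tensor_map G H x y))"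
proof -
  define \<phi> where "\<phi> = (\<lambda>a. \<psi> (N #>\<^bsub>A\<^esub> a))"
  have \<phi>: "\<phi> \<in> hom A circle_group" "continuous_map TA circle_top \<phi>" "N \<subseteq> kernel A circle_group \<phi>"
    using character_comp_r_coset_hom[OF A.is_group normal_N topspace_TA]
      character_comp_r_coset_continuous[OF A.is_group normal_N topspace_TA]
      character_comp_r_coset_kernel[OF A.is_group normal_N topspace_TA] \<psi>
    unfolding \<phi>_def by (simp_all add: tensor_eqs)
  have "continuous_map (prod_topology TG TH) circle_top (\<phi> \<circ> frag_of)"
    using continuous_map_compose[OF continuous_map_frag_of_free_top_ab_topology \<phi>(2)] .
  then have "continuous_map (prod_topology TG TH) circle_top (\<lambda>(x, y). \<phi> (frag_of (x, y)))"
    by (simp add: o_def case_prod_unfold)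
  moreover have "(\<forall>x\<in>carrier G. (\<lambda>y. \<phi> (frag_of (x, y))) \<in> hom H circle_group) \<and>
                 (\<forall>y\<in>carrier H. (\<lambda>x. \<phi> (frag_of (x, y))) \<in> hom G circle_group)"
    using tensor_N_subset_kernel_iff[OF G.monoid_axioms H.monoid_axioms group_circle_group \<phi>(1)] \<phi>(3)
    by blast
  ultimately have "cont_bihom G TG H TH circle_group circle_top (\<lambda>x y. \<phi> (frag_of (x, y)))"
    using cont_bihom_of_continuous_map[OF G.is_group topspace_G H.is_group topspace_H] by blast
  then show ?thesis
    by (simp add: \<phi>_def tensor_eqs)
qed

lemma cont_bihom_extends_to_A:
  assumes b: "cont_bihom G TG H TH circle_group circle_top b"
  obtains h where "h \<in> hom A circle_group" "continuous_map TA circle_top h"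
    "N \<subseteq> kernel A circle_group h"
    "\<And>x y. x \<in> carrier G \<Longrightarrow> y \<in> carrier H \<Longrightarrow> h (frag_of (x, y)) = b x y"
proof -
  have "(\<lambda>(x, y). b x y) ` (carrier G \<times> carrier H) \<subseteq> carrier circle_group"
    using hom_in_carrier[OF cont_bihom_hom_snd[OF b]] by auto
  then obtain h where h: "h \<in> hom (free_Abelian_group (carrier G \<times> carrier H)) circle_group"
    "\<And>p. p \<in> carrier G \<times> carrier H \<Longrightarrow> h (frag_of p) = (\<lambda>(x, y). b x y) p"
    using comm_group.free_Abelian_group_universal[OF comm_group_circle_group] by blast
  have h_hom: "h \<in> hom A circle_group"
    using h(1) by (simp add: tensor_A_def)
  have h_frag_of: "h (frag_of (x, y)) = b x y" if "x \<in> carrier G" "y \<in> carrier H" for x y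
    using h(2)[of "(x, y)"] that by simp
  have "N \<subseteq> kernel A circle_group h"
    unfolding tensor_N_subset_kernel_iff[OF G.monoid_axioms H.monoid_axioms group_circle_group h_hom]
  proof (intro conjI ballI)
    fix x assume "x \<in> carrier G"
    then show "(\<lambda>y. h (frag_of (x, y))) \<in> hom H circle_group"
      by (intro H.hom_eq[OF cont_bihom_hom_snd[OF b]]) (simp_all add: h_frag_of)
  next
    fix y assume "y \<in> carrier H"
    then show "(\<lambda>x. h (frag_of (x, y))) \<in> hom G circle_group"
      by (intro G.hom_eq[OF cont_bihom_hom_fst[OF b]]) (simp_all add: h_frag_of)
  qed
  moreover have "continuous_map TA circle_top h"
  proof (rule continuous_map_free_top_ab_topologyI[OF top_ab_group_circle])
    show "h \<in> hom (free_Abelian_group (topspace (prod_topology TG TH))) circle_group"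
      using h(1) by simp
    show "continuous_map (prod_topology TG TH) circle_top (h \<circ> frag_of)"
      using continuous_map_cont_bihom_circle[OF top_ab_G top_ab_H b]
      by (rule continuous_map_eq) (simp add: h(2))
  qed
  ultimately show thesis
    using that h_hom h_frag_of by blast
qed

lemma character_tensor_map_exists:
  assumes b: "cont_bihom G TG H TH circle_group circle_top b"
  obtains \<psi> where "\<psi> \<in> characters (tensor_group G H) (tensor_top G TG H TH)"
    "\<And>x y. x \<in> carrier G \<Longrightarrow> y \<in> carrier H \<Longrightarrow> \<psi> (tensor_map G H x y) = b x y"
proof -
  obtain h where h: "h \<in> hom A circle_group" "continuous_map TA circle_top h"
    "N \<subseteq> kernel A circle_group h"
    "\<And>x y. x \<in> carrier G \<Longrightarrow> y \<in> carrier H \<Longrightarrow> h (frag_of (x, y)) = b x y"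
    using cont_bihom_extends_to_A[OF b] by blast
  obtain \<psi> where \<psi>: "\<psi> \<in> characters (A Mod N) (quotient_group_topology A N TA)"
    "\<And>a. a \<in> carrier A \<Longrightarrow> \<psi> (N #>\<^bsub>A\<^esub> a) = h a"
    using character_quotient_group_exists[OF A.is_group normal_N topspace_TA h(1-3)] by blast
  show thesis
  proof (rule that)
    show "\<psi> \<in> characters (tensor_group G H) (tensor_top G TG H TH)"
      using \<psi>(1) by (simp add: tensor_eqs)
    show "\<psi> (tensor_map G H x y) = b x y" if "x \<in> carrier G" "y \<in> carrier H" for x y
      using \<psi>(2)[OF frag_of_in_A[OF that]] h(4)[OF that] by (simp add: tensor_eqs)
  qed
qed

lemma characters_tensor_eqI:
  assumes \<psi>: "\<psi> \<in> characters (tensor_group G H) (tensor_top G TG H TH)"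
    and \<psi>': "\<psi>' \<in> characters (tensor_group G H) (tensor_top G TG H TH)"
    and eq: "\<And>x y. x \<in> carrier G \<Longrightarrow> y \<in> carrier H \<Longrightarrow> \<psi> (tensor_map G H x y) = \<psi>' (tensor_map G H x y)"
  shows "\<psi> = \<psi>'"
proof -
  have "(\<lambda>a. \<theta> (N #>\<^bsub>A\<^esub> a)) \<in> hom (free_Abelian_group (topspace (prod_topology TG TH))) circle_group"
    if "\<theta> \<in> characters (tensor_group G H) (tensor_top G TG H TH)" for \<theta>
    using character_comp_r_coset_hom[OF A.is_group normal_N topspace_TA] that
    by (simp add: tensor_eqs tensor_A_def)
  note hom = this
  have "\<psi> (N #>\<^bsub>A\<^esub> a) = \<psi>' (N #>\<^bsub>A\<^esub> a)" if "a \<in> carrier A" for a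
  proof (rule hom_free_Abelian_group_eqI[OF group_circle_group hom[OF \<psi>] hom[OF \<psi>']])
    show "a \<in> carrier (free_Abelian_group (topspace (prod_topology TG TH)))"
      using that by (simp add: tensor_A_def)
  qed (use eq in \<open>auto simp: tensor_eqs\<close>)
  then show ?thesis
    using \<psi> \<psi>' by (intro characters_quotient_group_eqI) (auto simp: tensor_eqs)
qed

lemma represents_bicharacters_tensor:
  "represents_bicharacters G TG H TH (tensor_group G H) (tensor_top G TG H TH) (tensor_map G H)"
  unfolding represents_bicharacters_def
proof (intro conjI ballI allI impI)
  show "tensor_map G H x y \<in> carrier (tensor_group G H)" if "x \<in> carrier G" "y \<in> carrier H" for x y
    using frag_of_in_A[OF that] by (auto simp: tensor_eqs FactGroup_def RCOSETS_def)
  fix b assume b: "cont_bihom G TG H TH circle_group circle_top b"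
  obtain \<psi> where \<psi>: "\<psi> \<in> characters (tensor_group G H) (tensor_top G TG H TH)"
    "\<And>x y. x \<in> carrier G \<Longrightarrow> y \<in> carrier H \<Longrightarrow> \<psi> (tensor_map G H x y) = b x y"
    using character_tensor_map_exists[OF b] by blast
  show "\<exists>!\<psi>. \<psi> \<in> characters (tensor_group G H) (tensor_top G TG H TH) \<and>
                  (\<forall>x\<in>carrier G. \<forall>y\<in>carrier H. \<psi> (tensor_map G H x y) = b x y)"
  proof (rule ex1I[of _ \<psi>])
    fix \<psi>' assume \<psi>': "\<psi>' \<in> characters (tensor_group G H) (tensor_top G TG H TH) \<and>
                   (\<forall>x\<in>carrier G. \<forall>y\<in>carrier H. \<psi>' (tensor_map G H x y) = b x y)"
    show "\<psi>' = \<psi>"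
      by (rule characters_tensor_eqI[OF conjunct1[OF \<psi>'] \<psi>(1)]) (simp add: \<psi>(2) \<psi>')
  qed (use \<psi> in blast)
qed (rule cont_bihom_character_tensor_map)

end

text \<open>Only the universal property for circle-valued bihomomorphisms, the \<open>TYPE(complex)\<close>
instance, is needed.\<close>

theorem proposition3p5:
  fixes G :: "'a monoid" and TG :: "'a topology"
    and H :: "'b monoid" and TH :: "'b topology"
    and Q :: "'c monoid" and TQ :: "'c topology" and t :: "'a \<Rightarrow> 'b \<Rightarrow> 'c"
  assumes "class_Q G TG" and "class_Q H TH"
    and "is_Q_tensor TYPE(complex) G TG H TH Q TQ t"
    and "is_Q_tensor TYPE('c) G TG H TH Q TQ t"
  shows "dual_group (tensor_group G H) (tensor_top G TG H TH) \<cong> bichar_group G TG H TH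
         \<and> dual_group Q TQ \<cong> bichar_group G TG H TH"
proof -
  interpret top_ab_group_pair G TG H TH
    using assms(1,2) unfolding class_Q_def by unfold_locales auto
  note groups = G.is_group topspace_G H.is_group topspace_H
  have "dual_group (tensor_group G H) (tensor_top G TG H TH) \<cong> bichar_group G TG H TH"
    by (rule dual_group_iso_bichar_group[OF represents_bicharacters_tensor groups])
  moreover have "dual_group Q TQ \<cong> bichar_group G TG H TH"
    using represents_bicharacters_Q_tensor[OF assms(3) G.is_group H.is_group]
    by (rule dual_group_iso_bichar_group[OF _ groups])
  ultimately show ?thesis ..
qed

end
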